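(* Let $q\in\mathbf{k}$ be invertible. The Koszul dual operad of the operad of differential $q$-tridendriform algebras of weight zero is the operad of $\frac1q$-triassociative algebras $(T,\dashv,\vdash,\perp)$ equipped with one linear operator $\partial:T\to T$ lying in the centroid and satisfying $\partial^2=0$, i.e. $\partial(a\ast b)=\partial(a)\ast b=a\ast\partial(b)$ for all $a,b\in T$ and $\ast\in\{\dashv,\vdash,\perp\}$, and $\partial\circ\partial=0$.
   Context: $\mathbf{k}$ is a commutative unital ring (a field for Koszul duality). For $q\in\mathbf{k}$, the operad of differential $q$-tridendriform algebras of weight zero is the (nonsymmetric, quadratic) operad generated by three binary operations $\prec,\succ,\bullet$ and one unary operation $d$, subject to the $q$-tridendriform relations (with $\star_q:=\prec+\succ+q\bullet$): $(a\prec b)\prec c=a\prec(b\star_q c)$, $(a\succ b)\prec c=a\succ(b\prec c)$, $(a\star_q b)\succ c=a\succ(b\succ c)$, $(a\succ b)\bullet c=a\succ(b\bullet c)$, $(a\prec b)\bullet c=a\bullet(b\succ c)$, $(a\bullet b)\prec c=a\bullet(b\prec c)$, $(a\bullet b)\bullet c=a\bullet(b\bullet c)$, and the Leibniz relations $d(a\ast b)=d(a)\ast b+a\ast d(b)$ for $\ast\in\{\prec,\succ,\bullet\}$. Koszul duality of operads is in the sense of Ginzburg–Kapranov/Loday–Vallette. For $p\in\mathbf{k}$, a $p$-triassociative algebra is a $\mathbf{k}$-module $T$ with bilinear operations $\dashv,\vdash,\perp$ such that for all $a,b,c$: $(a\dashv b)\dashv c=a\dashv(b\dashv c)$, $(a\dashv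 b)\dashv c=a\dashv(b\vdash c)$, $(a\vdash b)\dashv c=a\vdash(b\dashv c)$, $(a\dashv b)\vdash c=a\vdash(b\vdash c)$, $(a\vdash b)\vdash c=a\vdash(b\vdash c)$, $(a\perp b)\perp c=a\perp(b\perp c)$, $(a\dashv b)\dashv c=p\,a\dashv(b\perp c)$, $(a\perp b)\dashv c=a\perp(b\dashv c)$, $(a\dashv b)\perp c=a\perp(b\vdash c)$, $(a\vdash b)\perp c=a\vdash(b\perp c)$, $p\,(a\perp b)\vdash c=a\vdash(b\vdash c)$. *)

theory Defs
  imports Main
begin

text \<open>
  For the differential q-tridendriform
  operad: Prec = prec, Succ = succ, Bul = bullet, and the unary generator is d.
  For the dual operad (generators = dual basis): Prec = dashv, Succ = vdash,
  Bul = perp, and the unary generator is the operator partial.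
\<close>

datatype bop = Prec | Succ | Bul

text \<open>Basis of the weight-2 part of the free nonsymmetric operad on these generators
  (tree monomials with two vertices):
  C1 m n = m o_1 n, i.e. (a n b) m c;   C2 m n = m o_2 n, i.e. a m (b n c);
  DTop m = d o m, i.e. d(a m b);  DL m = m o_1 d, i.e. (d a) m b;
  DR m = m o_2 d, i.e. a m (d b);  DD = d o d, i.e. d(d a).\<close>

datatype tree2 = C1 bop bop | C2 bop bop | DTop bop | DL bop | DR bop | DD

definition all_bops :: "bop list" where
  "all_bops = [Prec, Succ, Bul]"

definition all_tree2 :: "tree2 list" where
  "all_tree2 =
     [C1 m n. m \<leftarrow> all_bops, n \<leftarrow> all_bops] @ [C2 m n. m \<leftarrow> all_bops, n \<leftarrow> all_bops]
     @ map DTop all_bops @ map DL all_bops @ map DR all_bops @ [DD]"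

type_synonym 'k w2 = "tree2 \<Rightarrow> 'k"

definition vec :: "(tree2 \<times> 'k::comm_ring_1) list \<Rightarrow> 'k w2" where
  "vec xs t = sum_list (map snd (filter (\<lambda>p. fst p = t) xs))"

text \<open>Sign of the Koszul pairing on tree monomials (Loday--Vallette convention for
  nonsymmetric operads: + on partial composition o_1 of binary operations, - on o_2;
  for the unary generator: + on d o m and d o d, - on m o_i d).\<close>
definition eps :: "tree2 \<Rightarrow> 'k::comm_ring_1" where
  "eps t = (case t of C1 _ _ \<Rightarrow> 1 | C2 _ _ \<Rightarrow> -1 | DTop _ \<Rightarrow> 1 | DL _ \<Rightarrow> -1
                 | DR _ \<Rightarrow> -1 | DD \<Rightarrow> 1)"

definition pairing :: "'k::comm_ring_1 w2 \<Rightarrow> 'k w2 \<Rightarrow> 'k" where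
  "pairing v w = (\<Sum>t\<in>set all_tree2. eps t * v t * w t)"

definition lspan :: "'k::comm_ring_1 w2 list \<Rightarrow> 'k w2 set" where
  "lspan vs = {w. \<exists>c. w = (\<lambda>t. \<Sum>i<length vs. c i * (vs ! i) t)}"

text \<open>Koszul dual relations: P(E,R)^! = P(E^\<or>, R^\<bottom>).\<close>
definition koszul_dual_rel :: "'k::comm_ring_1 w2 set \<Rightarrow> 'k w2 set" where
  "koszul_dual_rel R = {w. \<forall>v\<in>R. pairing v w = 0}"

text \<open>Relations (as LHS - RHS) of differential q-tridendriform algebras of weight zero.\<close>
definition diff_tridend_rels :: "'k::comm_ring_1 \<Rightarrow> 'k w2 list" where
  "diff_tridend_rels q =
    [ vec [(C1 Prec Prec, 1), (C2 Prec Prec, -1), (C2 Prec Succ, -1), (C2 Prec Bul, -q)],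
      vec [(C1 Prec Succ, 1), (C2 Succ Prec, -1)],
      vec [(C1 Succ Prec, 1), (C1 Succ Succ, 1), (C1 Succ Bul, q), (C2 Succ Succ, -1)],
      vec [(C1 Bul Succ, 1), (C2 Succ Bul, -1)],
      vec [(C1 Bul Prec, 1), (C2 Bul Succ, -1)],
      vec [(C1 Prec Bul, 1), (C2 Bul Prec, -1)],
      vec [(C1 Bul Bul, 1), (C2 Bul Bul, -1)] ]
    @ map (\<lambda>m. vec [(DTop m, 1), (DL m, -1), (DR m, -1)]) all_bops"

definition triass_centroid_rels :: "'k::comm_ring_1 \<Rightarrow> 'k w2 list" where
  "triass_centroid_rels p =
    [ vec [(C1 Prec Prec, 1), (C2 Prec Prec, -1)],
      vec [(C1 Prec Prec, 1), (C2 Prec Succ, -1)],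
      vec [(C1 Prec Succ, 1), (C2 Succ Prec, -1)],
      vec [(C1 Succ Prec, 1), (C2 Succ Succ, -1)],
      vec [(C1 Succ Succ, 1), (C2 Succ Succ, -1)],
      vec [(C1 Bul Bul, 1), (C2 Bul Bul, -1)],
      vec [(C1 Prec Prec, 1), (C2 Prec Bul, -p)],
      vec [(C1 Prec Bul, 1), (C2 Bul Prec, -1)],
      vec [(C1 Bul Prec, 1), (C2 Bul Succ, -1)],
      vec [(C1 Bul Succ, 1), (C2 Succ Bul, -1)],
      vec [(C1 Succ Bul, p), (C2 Succ Succ, -1)] ]
    @ map (\<lambda>m. vec [(DTop m, 1), (DL m, -1)]) all_bops
    @ map (\<lambda>m. vec [(DTop m, 1), (DR m, -1)]) all_bops
    @ [vec [(DD, 1)]]"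

end

theory Submission
  imports Defs
begin

text \<open>
  The weight-two part of the free operad has a basis of 28 tree monomials, on which the Koszul
  pairing is diagonal with entries \<open>\<plusminus>1\<close>, and the dual relations are the orthogonal complement
  \<open>R\<^sup>\<bottom>\<close> of the span \<open>R\<close> of the ten given relations. The 18 listed dual relations are orthogonal to
  \<open>R\<close> by direct computation (this is where the coefficient \<open>1/q\<close> cancels against \<open>q\<close>). Conversely,
  each relation in \<open>R\<close> has a pivot coordinate occurring in no other one, so an element of \<open>R\<^sup>\<bottom>\<close> is
  determined by its 18 remaining coordinates, and each of those is the free coordinate of exactly
  one dual relation.
\<close>

lemma set_all_tree2: "set all_tree2 = UNIV"
proof -
  have "t \<in> set all_tree2" for t
    by (cases t) (simp_all add: all_tree2_def all_bops_def; metis bop.exhaust)+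
  then show ?thesis by blast
qed

lemma pairing_UNIV: "pairing v w = (\<Sum>t\<in>UNIV. eps t * v t * w t)"
  by (simp add: pairing_def set_all_tree2)

lemma finite_tree2 [simp]: "finite (UNIV :: tree2 set)"
  by (metis List.finite_set set_all_tree2)

lemma pairing_lincomb_left:
  "pairing (\<lambda>t. \<Sum>i\<in>I. c i * v i t) w = (\<Sum>i\<in>I. c i * pairing (v i) w)"
  unfolding pairing_def
  by (simp add: sum_distrib_left sum_distrib_right mult_ac sum.swap[of _ I])

lemma pairing_lincomb_right:
  "pairing v (\<lambda>t. \<Sum>i\<in>I. c i * w i t) = (\<Sum>i\<in>I. c i * pairing v (w i))"
  unfolding pairing_def
  by (simp add: sum_distrib_left sum_distrib_right mult_ac sum.swap[of _ I])

lemma pairing_vec: "pairing (vec xs) w = (\<Sum>(t, c)\<leftarrow>xs. eps t * c * w t)"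
proof (induction xs)
  case Nil
  then show ?case by (simp add: pairing_def vec_def)
next
  case (Cons x xs)
  obtain s c where x: "x = (s, c)" by fastforce
  have "vec (x # xs) = (\<lambda>t. (if t = s then c else 0) + vec xs t)"
    by (auto simp: vec_def x)
  then have "pairing (vec (x # xs)) w
      = (\<Sum>t\<in>UNIV. eps t * (if t = s then c else 0) * w t) + pairing (vec xs) w"
    by (simp add: pairing_UNIV distrib_left distrib_right sum.distrib)
  also have "(\<Sum>t\<in>UNIV. eps t * (if t = s then c else 0) * w t) = eps s * c * w s"
    by (simp add: if_distrib if_distribR cong: if_cong)
  finally show ?case by (simp add: Cons.IH x)
qed

lemma nth_mem_lspan: "j < length vs \<Longrightarrow> vs ! j \<in> lspan vs"
  unfolding lspan_def
  by (auto intro!: exI[of _ "\<lambda>i. if i = j then 1 else 0"] simp: if_distrib if_distribR cong: if_cong)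

lemma koszul_dual_rel_lspan:
  "koszul_dual_rel (lspan vs) = {w. \<forall>v\<in>set vs. pairing v w = 0}"
proof (intro set_eqI iffI; simp)
  fix w
  assume w: "w \<in> koszul_dual_rel (lspan vs)"
  show "\<forall>v\<in>set vs. pairing v w = 0"
  proof
    fix v
    assume "v \<in> set vs"
    then obtain j where "j < length vs" "v = vs ! j"
      by (auto simp: in_set_conv_nth)
    then show "pairing v w = 0"
      using w nth_mem_lspan by (auto simp: koszul_dual_rel_def)
  qed
next
  fix w
  assume "\<forall>v\<in>set vs. pairing v w = 0"
  then show "w \<in> koszul_dual_rel (lspan vs)"
    by (auto simp: koszul_dual_rel_def lspan_def pairing_lincomb_left)
qed

lemma lspan_subset_koszul_dual_rel:
  assumes "\<forall>v\<in>set vs. \<forall>u\<in>set us. pairing v u = 0"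
  shows "lspan us \<subseteq> koszul_dual_rel (lspan vs)"
proof
  fix w
  assume "w \<in> lspan us"
  then obtain c where "w = (\<lambda>t. \<Sum>i<length us. c i * (us ! i) t)"
    by (auto simp: lspan_def)
  then have "\<forall>v\<in>set vs. pairing v w = 0"
    using assms by (simp add: pairing_lincomb_right)
  then show "w \<in> koszul_dual_rel (lspan vs)"
    by (simp add: koszul_dual_rel_lspan)
qed

lemma diff_tridend_rels_orthogonal_triass_centroid_rels:
  fixes q :: "'k::field"
  assumes "q \<noteq> 0"
  shows "\<forall>v\<in>set (diff_tridend_rels q). \<forall>u\<in>set (triass_centroid_rels (inverse q)). pairing v u = 0"
  using assms
  by (simp add: diff_tridend_rels_def triass_centroid_rels_def all_bops_def pairing_vec eps_def vec_def)

lemma orthogonal_diff_tridend_rels_mem_lspan: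
  fixes q :: "'k::field"
  assumes "q \<noteq> 0"
    and orth: "\<forall>v\<in>set (diff_tridend_rels q). pairing v w = 0"
  shows "w \<in> lspan (triass_centroid_rels (inverse q))"
proof -
  have eqs:
    "w (C1 Prec Prec) = - w (C2 Prec Prec) - w (C2 Prec Succ) - q * w (C2 Prec Bul)"
    "w (C2 Succ Prec) = - w (C1 Prec Succ)"
    "w (C2 Succ Succ) = - w (C1 Succ Prec) - w (C1 Succ Succ) - q * w (C1 Succ Bul)"
    "w (C2 Succ Bul) = - w (C1 Bul Succ)"
    "w (C2 Bul Succ) = - w (C1 Bul Prec)"
    "w (C2 Bul Prec) = - w (C1 Prec Bul)"
    "w (C2 Bul Bul) = - w (C1 Bul Bul)"
    "w (DTop m) = - w (DL m) - w (DR m)" for m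
    using orth by (auto simp: diff_tridend_rels_def all_bops_def pairing_vec eps_def
        eq_neg_iff_add_eq_0 algebra_simps intro: bop.induct)
  \<comment> \<open>\<open>c ! i\<close> is \<open>w\<close> at the free coordinate of the \<open>i\<close>-th dual relation, divided by its coefficient there.\<close>
  define c where "c = [- w (C2 Prec Prec), - w (C2 Prec Succ), w (C1 Prec Succ), w (C1 Succ Prec),
     w (C1 Succ Succ), w (C1 Bul Bul), - q * w (C2 Prec Bul), w (C1 Prec Bul), w (C1 Bul Prec),
     w (C1 Bul Succ), q * w (C1 Succ Bul), - w (DL Prec), - w (DL Succ), - w (DL Bul),
     - w (DR Prec), - w (DR Succ), - w (DR Bul), w DD]"
  have "\<forall>t\<in>set all_tree2. w t = (\<Sum>i<length (triass_centroid_rels (inverse q)).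
      c ! i * (triass_centroid_rels (inverse q) ! i) t)"
    using assms
    by (simp add: all_tree2_def all_bops_def triass_centroid_rels_def eval_nat_numeral c_def vec_def
        eqs algebra_simps)
  then show ?thesis
    unfolding lspan_def set_all_tree2 by auto
qed

theorem proposition3p25:
  fixes q :: "'k::field"
  assumes "q \<noteq> 0"
  shows "koszul_dual_rel (lspan (diff_tridend_rels q)) = lspan (triass_centroid_rels (inverse q))"
proof
  show "koszul_dual_rel (lspan (diff_tridend_rels q)) \<subseteq> lspan (triass_centroid_rels (inverse q))"
    using orthogonal_diff_tridend_rels_mem_lspan[OF assms] by (auto simp: koszul_dual_rel_lspan)
  show "lspan (triass_centroid_rels (inverse q)) \<subseteq> koszul_dual_rel (lspan (diff_tridend_rels q))"
    using lspan_subset_koszul_dual_rel diff_tridend_rels_orthogonal_triass_centroid_rels[OF assms] .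
qed

end
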